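(* Let $c \in (0,1]$. If $f\in\mathcal{A}$ satisfies \[ \frac{1}{3}\left(\frac{zf'(z)}{f(z)}\right)^3+\left(1+\frac{zf''(z)}{f'(z)}-\frac{zf'(z)}{f(z)}\right)\left(\frac{zf'(z)}{f(z)}\right)\prec\frac{1}{3}\left(\sqrt{1+cz}\right)^3+\frac{cz}{2\sqrt{1+cz}} \] in $\mathbb{D}$, then $f\in\mathcal{S}^*(q_c)$.
   Context: $\mathbb{D}$ is the open unit disk. $\mathcal{A}$ is the class of functions $f$ analytic in $\mathbb{D}$ with $f(0)=0$, $f'(0)=1$. For $c\in(0,1]$, $\mathcal{S}^*(q_c)$ is the class of $f\in\mathcal{A}$ with $\left|\left(\frac{zf'(z)}{f(z)}\right)^2-1\right|<c$ for all $z\in\mathbb{D}$, equivalently $\frac{zf'(z)}{f(z)}\prec\sqrt{1+cz}$ (branch with $\sqrt1=1$). For analytic $F,G$ on $\mathbb{D}$, $F\prec G$ means $F=G\circ\omega$ for some analytic $\omega:\mathbb{D}\to\mathbb{D}$ with $\omega(0)=0$. The left-hand side of the subordination is assumed analytic in $\mathbb{D}$. *)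

theory Defs
  imports "HOL-Complex_Analysis.Complex_Analysis"
begin

definition unit_disk :: "complex set" where
  "unit_disk = ball 0 1"

definition classA :: "(complex \<Rightarrow> complex) \<Rightarrow> bool" where
  "classA f \<longleftrightarrow> f holomorphic_on unit_disk \<and> f 0 = 0 \<and> deriv f 0 = 1"

definition subordinate :: "(complex \<Rightarrow> complex) \<Rightarrow> (complex \<Rightarrow> complex) \<Rightarrow> bool" where
  "subordinate F G \<longleftrightarrow>
     (\<exists>\<omega>. \<omega> holomorphic_on unit_disk \<and> \<omega> 0 = 0 \<and> \<omega> ` unit_disk \<subseteq> unit_disk \<and>
          (\<forall>z\<in>unit_disk. F z = G (\<omega> z)))"

text \<open>S*(q_c): |(z f'/f)^2 - 1| < c in the disk (at z = 0 the quotient z f'/f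
  is 1 by continuity, where the inequality holds trivially).\<close>
definition Sstar_qc :: "real \<Rightarrow> (complex \<Rightarrow> complex) \<Rightarrow> bool" where
  "Sstar_qc c f \<longleftrightarrow> classA f \<and> (\<forall>z\<in>unit_disk - {0}. f z \<noteq> 0) \<and>
     (\<forall>z\<in>unit_disk - {0}. cmod ((z * deriv f z / f z)^2 - 1) < c)"

end

theory Submission
  imports Defs
begin

(* Write p = z f'/f and q = sqrt (1 + c z). Since z q' = c z / (2 q), the hypothesis says that
   p^3/3 + z p' is subordinate to q^3/3 + z q', and the claim is |p^2 - 1| < c. If this fails,
   Jack's lemma applied to w = (p^2 - 1)/c yields z0 with s = p(z0) satisfying |s^2 - 1| = c and
   z0 p'(z0) = k (s^2 - 1)/(2 s) for some k >= 1, while s lies in the sector |arg s| <= pi/4.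
   The subordination then forces s^3/3 + k (s^2 - 1)/(2 s) = t^3/3 + (t^2 - 1)/(2 t) for some t
   with Re t >= 0 and |t^2 - 1| < c, which an algebraic argument in that sector rules out. *)

lemma sector_decompose:
  assumes "\<bar>Im s\<bar> \<le> Re s"
  obtains A B where "0 \<le> A" "0 \<le> B" "s = Complex ((A + B) / 2) ((A - B) / 2)"
proof
  show "0 \<le> Re s + Im s" "0 \<le> Re s - Im s" using assms by linarith+
  show "s = Complex ((Re s + Im s + (Re s - Im s)) / 2) ((Re s + Im s - (Re s - Im s)) / 2)"
    by (simp add: complex_eq_iff)
qed

lemma sector_Re_products_nonneg:
  assumes "\<bar>Im s\<bar> \<le> Re s" "\<bar>Im t\<bar> \<le> Re t"
  shows "0 \<le> Re (s * t)" and "0 \<le> Re (s * cnj t)"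
    and "0 \<le> Re (s * (t\<^sup>2 + t * s + s\<^sup>2) * cnj (t + s))"
proof -
  obtain A B where AB: "0 \<le> A" "0 \<le> B" and s: "s = Complex ((A + B) / 2) ((A - B) / 2)"
    using sector_decompose[OF assms(1)] .
  obtain P R where PR: "0 \<le> P" "0 \<le> R" and t: "t = Complex ((P + R) / 2) ((P - R) / 2)"
    using sector_decompose[OF assms(2)] .
  have "0 \<le> (A*R + B*P) / 2" using AB PR by simp
  also have "\<dots> = Re (s * t)" unfolding s t by (simp add: field_simps)
  finally show "0 \<le> Re (s * t)" .
  have "0 \<le> (A*P + B*R) / 2" using AB PR by simp
  also have "\<dots> = Re (s * cnj t)" unfolding s t by (simp add: field_simps)
  finally show "0 \<le> Re (s * cnj t)" .
  have "0 \<le> (2*A*B^3 + 2*A^3*B + 4*R*A*B^2 + 2*R^2*A*B + R^3*A + 4*P*A^2*B + 2*P*R*B^2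
       + 2*P*R*A^2 + P*R^2*B + 2*P^2*A*B + P^2*R*A + P^3*B) / 4"
    using AB PR by simp
  also have "\<dots> = Re (s * (t\<^sup>2 + t * s + s\<^sup>2) * cnj (t + s))"
    unfolding s t by (simp add: power2_eq_square power3_eq_cube field_simps)
  finally show "0 \<le> Re (s * (t\<^sup>2 + t * s + s\<^sup>2) * cnj (t + s))" .
qed

lemma abs_Im_le_Re_if_sq_near_one:
  assumes "0 \<le> Re s" "cmod (s\<^sup>2 - 1) \<le> 1"
  shows "\<bar>Im s\<bar> \<le> Re s"
proof -
  have "- 1 \<le> Re (s\<^sup>2 - 1)" using abs_Re_le_cmod[of "s\<^sup>2 - 1"] assms(2) by linarith
  then have "(Im s)\<^sup>2 \<le> (Re s)\<^sup>2" by (simp add: power2_eq_square)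
  then have "\<bar>Im s\<bar> \<le> \<bar>Re s\<bar>" by (simp add: abs_le_square_iff)
  with assms(1) show ?thesis by simp
qed

lemma abs_Im_less_Re_if_sq_near_one:
  assumes "0 \<le> Re t" "cmod (t\<^sup>2 - 1) < 1"
  shows "\<bar>Im t\<bar> < Re t"
proof -
  have "- 1 < Re (t\<^sup>2 - 1)" using abs_Re_le_cmod[of "t\<^sup>2 - 1"] assms(2) by linarith
  then have "(Im t)\<^sup>2 < (Re t)\<^sup>2" by (simp add: power2_eq_square)
  then have "\<bar>Im t\<bar>\<^sup>2 < (Re t)\<^sup>2" by simp
  from this assms(1) show ?thesis by (rule power_less_imp_less_base)
qed

lemma sector_factor_Re_pos:
  assumes s: "\<bar>Im s\<bar> \<le> Re s" and t: "\<bar>Im t\<bar> < Re t"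
  shows "0 < Re ((2 * s * t * (t\<^sup>2 + t * s + s\<^sup>2) + 3 * s * t + 3) * cnj (t * (t + s)))"
proof -
  have t': "\<bar>Im t\<bar> \<le> Re t" using t by simp
  have "0 \<le> Re (s * cnj t) + Re (s * cnj s)"
    using sector_Re_products_nonneg(2)[OF s t'] by (simp add: complex_mult_cnj)
  then have cross: "0 \<le> Re (s * cnj (t + s))" by (simp add: algebra_simps)
  have "\<bar>Im t\<bar> * \<bar>Im t\<bar> < Re t * Re t" using t by (intro mult_strict_mono) auto
  then have "0 < Re (t\<^sup>2)" by (simp add: power2_eq_square)
  then have "0 < Re (t\<^sup>2) + Re (s * t)" using sector_Re_products_nonneg(1)[OF s t'] by linarith
  then have diag: "0 < Re (t * (t + s))" by (simp add: algebra_simps power2_eq_square)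
  define X1 where "X1 = s * (t\<^sup>2 + t * s + s\<^sup>2) * cnj (t + s)"
  define X2 where "X2 = s * cnj (t + s)"
  define Y where "Y = t * (t + s)"
  have "(2 * s * t * (t\<^sup>2 + t * s + s\<^sup>2) + 3 * s * t + 3) * cnj (t * (t + s)) =
      (t * cnj t) * (2 * X1 + 3 * X2) + 3 * cnj Y"
    unfolding X1_def X2_def Y_def by (simp add: algebra_simps power2_eq_square)
  also have "t * cnj t = of_real ((cmod t)\<^sup>2)" by (rule complex_norm_square[symmetric])
  finally have "Re ((2 * s * t * (t\<^sup>2 + t * s + s\<^sup>2) + 3 * s * t + 3) * cnj (t * (t + s))) =
      (cmod t)\<^sup>2 * (2 * Re X1 + 3 * Re X2) + 3 * Re Y"
    by simp
  moreover have "0 \<le> (cmod t)\<^sup>2 * (2 * Re X1 + 3 * Re X2)"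
    using sector_Re_products_nonneg(3)[OF s t'] cross unfolding X1_def X2_def by simp
  ultimately show ?thesis using diag unfolding Y_def by linarith
qed

lemma cleared_admissibility_equation_impossible:
  fixes s t :: complex and c k :: real
  assumes c: "0 < c" "c \<le> 1" and s: "0 \<le> Re s" "cmod (s\<^sup>2 - 1) = c"
    and t: "0 \<le> Re t" "cmod (t\<^sup>2 - 1) < c" and k: "1 \<le> k"
  shows "2 * s^4 * t + 3 * t * k * (s\<^sup>2 - 1) \<noteq> 2 * t^4 * s + 3 * s * (t\<^sup>2 - 1)"
proof
  assume eq: "2 * s^4 * t + 3 * t * k * (s\<^sup>2 - 1) = 2 * t^4 * s + 3 * s * (t\<^sup>2 - 1)"
  (* The equation factors as (t - s) E = 3 (k - 1) t \<sigma>; multiplying by t + s and by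
     conjugates turns it into X D = r with r >= 0, whereas Re X < 0 < Re D. *)
  define \<sigma> where "\<sigma> = s\<^sup>2 - 1"
  define \<tau> where "\<tau> = t\<^sup>2 - 1"
  define E where "E = 2 * s * t * (t\<^sup>2 + t * s + s\<^sup>2) + 3 * s * t + 3"
  define D where "D = E * cnj (t * (t + s))"
  define X where "X = \<tau> * cnj \<sigma> - of_real (c\<^sup>2)"
  define r where "r = 3 * (k - 1) * (cmod (t * (t + s)))\<^sup>2 * c\<^sup>2"
  have "(t - s) * E = 3 * (of_real k - 1) * t * \<sigma>"
    using eq unfolding E_def \<sigma>_def by algebra
  then have E: "(\<tau> - \<sigma>) * E = 3 * (of_real k - 1) * (t * (t + s)) * \<sigma>"
    unfolding \<tau>_def \<sigma>_def by algebra
  have norm_\<sigma>: "cmod \<sigma> = c" using s(2) unfolding \<sigma>_def .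
  then have \<sigma>\<sigma>: "\<sigma> * cnj \<sigma> = of_real (c\<^sup>2)" by (metis complex_norm_square)
  have "X * D = ((\<tau> - \<sigma>) * E) * cnj (t * (t + s)) * cnj \<sigma>"
    unfolding X_def D_def \<sigma>\<sigma>[symmetric] by (simp add: algebra_simps)
  also have "\<dots> = 3 * (of_real k - 1) * ((t * (t + s)) * cnj (t * (t + s))) * (\<sigma> * cnj \<sigma>)"
    unfolding E by (simp add: algebra_simps)
  also have "\<dots> = of_real r"
    unfolding \<sigma>\<sigma> r_def complex_norm_square[symmetric] by (simp add: norm_\<sigma>)
  finally have XD: "X * D = of_real r" .
  have "Re (\<tau> * cnj \<sigma>) \<le> cmod \<tau> * c"
    using complex_Re_le_cmod[of "\<tau> * cnj \<sigma>"] norm_\<sigma> by (simp add: norm_mult)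
  also have "\<dots> < c\<^sup>2" using t(2) c unfolding \<tau>_def by (simp add: power2_eq_square)
  finally have "Re X < 0" unfolding X_def by simp
  moreover have D: "0 < Re D"
    unfolding D_def E_def
    using sector_factor_Re_pos abs_Im_le_Re_if_sq_near_one abs_Im_less_Re_if_sq_near_one
      c s t by auto
  then have "D \<noteq> 0" by auto
  then have "X = of_real r / D" using XD by (simp add: eq_divide_eq)
  then have "Re X = r * Re D / (cmod D)\<^sup>2" by (simp add: Re_divide cmod_power2)
  then have "0 \<le> Re X" using D k unfolding r_def by simp
  ultimately show False by simp
qed

lemma admissibility_condition_fails:
  fixes s t P :: complex and c k :: real
  assumes c: "0 < c" "c \<le> 1" and s: "0 \<le> Re s" "cmod (s\<^sup>2 - 1) = c"
    and t: "0 \<le> Re t" "cmod (t\<^sup>2 - 1) < c" "t \<noteq> 0" and k: "1 \<le> k"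
    and P: "2 * s * P = of_real k * (s\<^sup>2 - 1)"
  shows "(1/3) * s^3 + P \<noteq> (1/3) * t^3 + (t\<^sup>2 - 1) / (2 * t)"
proof
  define X where "X = (t\<^sup>2 - 1) / (2 * t)"
  assume "(1/3) * s^3 + P = (1/3) * t^3 + (t\<^sup>2 - 1) / (2 * t)"
  moreover have "2 * t * X = t\<^sup>2 - 1" unfolding X_def using t(3) by simp
  ultimately have "2 * s^4 * t + 3 * t * (2 * s * P) = 2 * t^4 * s + 3 * s * (t\<^sup>2 - 1)"
    unfolding X_def[symmetric] by algebra
  then show False
    unfolding P using cleared_admissibility_equation_impossible[OF c s t(1,2) k]
    by (simp add: mult.assoc)
qed

lemma Schwarz_Lemma_ball:
  fixes w :: "complex \<Rightarrow> complex"
  assumes holo: "w holomorphic_on ball 0 r" and "w 0 = 0"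
    and bounded: "\<And>z. cmod z < r \<Longrightarrow> cmod (w z) < 1" and z: "cmod z < r"
  shows "r * cmod (w z) \<le> cmod z"
proof -
  have r: "0 < r" using z norm_ge_zero[of z] by linarith
  define v where "v \<zeta> = w (of_real r * \<zeta>)" for \<zeta>
  have "v holomorphic_on ball 0 1" unfolding v_def
  proof (rule holomorphic_on_compose_gen[where g = w and t = "ball 0 r", unfolded o_def])
    show "(\<lambda>\<zeta>::complex. of_real r * \<zeta>) ` ball 0 1 \<subseteq> ball 0 r"
      using r by (auto simp: dist_0_norm norm_mult mult_less_cancel_left1)
  qed (intro holomorphic_intros, rule holo)
  moreover have "v 0 = 0" unfolding v_def using \<open>w 0 = 0\<close> by simp
  moreover have "\<And>\<zeta>. cmod \<zeta> < 1 \<Longrightarrow> cmod (v \<zeta>) < 1"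
    unfolding v_def using r by (intro bounded) (simp add: norm_mult)
  moreover have "cmod (z / of_real r) < 1" using r z by (simp add: norm_divide)
  ultimately have "cmod (v (z / of_real r)) \<le> cmod (z / of_real r)"
    by (rule Schwarz_Lemma(1))
  moreover have "v (z / of_real r) = w z" unfolding v_def using r by simp
  ultimately show ?thesis using r by (simp add: norm_divide field_simps)
qed

lemma radial_logderiv_ge_one:
  fixes w :: "complex \<Rightarrow> complex"
  assumes w: "(w has_field_derivative d) (at z0)" and w0: "w z0 \<noteq> 0"
    and bound: "\<And>x. 0 < x \<Longrightarrow> x < 1 \<Longrightarrow> cmod (w (of_real x * z0)) \<le> x * cmod (w z0)"
  shows "1 \<le> Re (z0 * d / w z0)"
proof (rule ccontr)
  assume "\<not> 1 \<le> Re (z0 * d / w z0)"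
  then have neg: "Re (z0 * d / w z0) - 1 < 0" by simp
  define g where "g x = Re (w (of_real x * z0) / w z0) - x" for x :: real
  have "((\<lambda>\<zeta>. w (\<zeta> * z0) / w z0) has_field_derivative (d * z0 / w z0)) (at (of_real 1))"
    using w w0 by (auto intro!: derivative_eq_intros DERIV_chain2[where f = w])
  then have "((\<lambda>x::real. w (of_real x * z0) / w z0) has_vector_derivative (d * z0 / w z0)) (at 1)"
    by (rule has_vector_derivative_real_field)
  from DERIV_diff[OF has_field_derivative_Re[OF this] DERIV_ident]
  have "(g has_real_derivative (Re (z0 * d / w z0) - 1)) (at 1)"
    unfolding g_def by (simp add: mult.commute)
  from DERIV_neg_dec_left[OF this neg]
  obtain \<delta> where \<delta>: "\<delta> > 0" "\<And>h. 0 < h \<Longrightarrow> h < \<delta> \<Longrightarrow> g 1 < g (1 - h)"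
    by blast
  define h where "h = min (\<delta> / 2) (1 / 2)"
  have h: "0 < h" "h < \<delta>" "h < 1" using \<delta> unfolding h_def by auto
  have "Re (w (of_real (1 - h) * z0) / w z0) \<le> cmod (w (of_real (1 - h) * z0)) / cmod (w z0)"
    using complex_Re_le_cmod by (metis norm_divide)
  also have "\<dots> \<le> 1 - h" using bound[of "1 - h"] h w0 by (simp add: divide_simps)
  finally have "g (1 - h) \<le> g 1" unfolding g_def using w0 by simp
  with \<delta> h show False by fastforce
qed

lemma circular_logderiv_real:
  fixes w :: "complex \<Rightarrow> complex"
  assumes w: "(w has_field_derivative d) (at z0)" and w0: "w z0 \<noteq> 0"
    and bound: "\<And>y. cmod (w (cis y * z0)) \<le> cmod (w z0)"
  shows "Im (z0 * d / w z0) = 0"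
proof -
  define a where "a = z0 * d / w z0"
  define g where "g y = Re (w (exp (\<i> * of_real y) * z0) / w z0)" for y :: real
  have "((\<lambda>\<zeta>. w (exp (\<i> * \<zeta>) * z0) / w z0) has_field_derivative (\<i> * a)) (at (of_real 0))"
    unfolding a_def using w w0 by (auto intro!: derivative_eq_intros DERIV_chain2[where f = w])
  then have "((\<lambda>y::real. w (exp (\<i> * of_real y) * z0) / w z0) has_vector_derivative (\<i> * a)) (at 0)"
    by (rule has_vector_derivative_real_field)
  from has_field_derivative_Re[OF this]
  have "(g has_real_derivative - Im a) (at 0)" unfolding g_def by simp
  moreover have "g y \<le> g 0" for y
  proof -
    have "g y \<le> cmod (w (cis y * z0)) / cmod (w z0)"
      unfolding g_def cis_conv_exp using complex_Re_le_cmod by (metis norm_divide)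
    also have "\<dots> \<le> 1" using bound[of y] w0 by simp
    finally show ?thesis unfolding g_def using w0 by simp
  qed
  ultimately show ?thesis unfolding a_def using DERIV_local_max[of g _ 0 1] by force
qed

lemma logderiv_real_ge_one:
  fixes w :: "complex \<Rightarrow> complex"
  assumes w: "(w has_field_derivative d) (at z0)" and w0: "w z0 \<noteq> 0"
    and radial: "\<And>x. 0 < x \<Longrightarrow> x < 1 \<Longrightarrow> cmod (w (of_real x * z0)) \<le> x * cmod (w z0)"
    and circular: "\<And>y. cmod (w (cis y * z0)) \<le> cmod (w z0)"
  obtains k where "1 \<le> k" "z0 * d = of_real k * w z0"
proof
  define a where "a = z0 * d / w z0"
  have "Im a = 0" unfolding a_def using circular_logderiv_real[OF w w0 circular] .
  then have "a = of_real (Re a)" by (simp add: complex_eq_iff)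
  moreover have "z0 * d = a * w z0" unfolding a_def using w0 by simp
  ultimately show "z0 * d = of_real (Re a) * w z0" by metis
  show "1 \<le> Re a" unfolding a_def using radial_logderiv_ge_one[OF w w0 radial] .
qed

lemma least_modulus_exit_point:
  fixes w :: "complex \<Rightarrow> complex"
  assumes cont: "continuous_on (ball 0 1) w" and z1: "z1 \<in> ball 0 1" "1 \<le> cmod (w z1)"
  obtains z0 where "z0 \<in> ball 0 1" "1 \<le> cmod (w z0)" "\<And>z. cmod z < cmod z0 \<Longrightarrow> cmod (w z) < 1"
proof -
  define K where "K = cball 0 (cmod z1) \<inter> w -` {y. 1 \<le> cmod y}"
  have sub: "cball 0 (cmod z1) \<subseteq> ball 0 1" using z1(1) by auto
  have "closed K" unfolding K_def
    by (rule continuous_closed_preimage[OF continuous_on_subset[OF cont sub]])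
       (auto intro: closed_Collect_le continuous_intros)
  moreover have "bounded K" unfolding K_def by (simp add: bounded_Int)
  ultimately have "compact K" by (simp add: compact_eq_bounded_closed)
  moreover have "z1 \<in> K" unfolding K_def using z1(2) by simp
  ultimately obtain z0 where z0: "z0 \<in> K" and least: "\<And>y. y \<in> K \<Longrightarrow> cmod z0 \<le> cmod y"
    using continuous_attains_inf[of K norm] continuous_on_norm_id by blast
  show ?thesis
  proof
    show "z0 \<in> ball 0 1" "1 \<le> cmod (w z0)" using z0 z1(1) unfolding K_def by auto
    fix z assume "cmod z < cmod z0"
    moreover have "cmod z0 \<le> cmod z1" using z0 unfolding K_def by simp
    ultimately show "cmod (w z) < 1" using least[of z] unfolding K_def by fastforce
  qed
qed

lemma Jack_lemma:
  fixes w :: "complex \<Rightarrow> complex"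
  assumes holo: "w holomorphic_on ball 0 1" and w0: "w 0 = 0"
    and z1: "z1 \<in> ball 0 1" "1 \<le> cmod (w z1)"
  obtains z0 k where "z0 \<in> ball 0 1" "z0 \<noteq> 0" "cmod (w z0) = 1"
    "\<And>z. cmod z < cmod z0 \<Longrightarrow> cmod (w z) < 1"
    "1 \<le> k" "z0 * deriv w z0 = of_real k * w z0"
proof -
  have cont: "continuous_on (ball 0 1) w" using holo holomorphic_on_imp_continuous_on by blast
  obtain z0 where z0: "z0 \<in> ball 0 1" "1 \<le> cmod (w z0)"
    and inside: "\<And>z. cmod z < cmod z0 \<Longrightarrow> cmod (w z) < 1"
    using least_modulus_exit_point[OF cont z1] by blast
  have "z0 \<noteq> 0" using z0(2) w0 by auto
  define r where "r = cmod z0"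
  have r: "0 < r" "r < 1" using \<open>z0 \<noteq> 0\<close> z0(1) unfolding r_def by auto
  have "w ` closure (ball 0 r) \<subseteq> cball 0 1"
  proof (rule image_closure_subset)
    show "continuous_on (closure (ball 0 r)) w"
      using r by (intro continuous_on_subset[OF cont]) auto
    show "w ` ball 0 r \<subseteq> cball 0 1" using inside unfolding r_def by (auto simp: less_imp_le)
  qed simp
  then have closed_bound: "cmod (w z) \<le> 1" if "cmod z \<le> r" for z
    using r that by (auto simp: image_subset_iff)
  have wz0: "cmod (w z0) = 1" using closed_bound[of z0] z0(2) unfolding r_def by simp
  then have "w z0 \<noteq> 0" by auto
  have w': "(w has_field_derivative deriv w z0) (at z0)"
    using holomorphic_derivI[OF holo _ z0(1)] by simp
  have "cmod (w (of_real x * z0)) \<le> x * cmod (w z0)" if "0 < x" "x < 1" for x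
  proof -
    have "r * cmod (w (of_real x * z0)) \<le> cmod (of_real x * z0)"
    proof (rule Schwarz_Lemma_ball)
      show "w holomorphic_on ball 0 r" by (rule holomorphic_on_subset[OF holo]) (use r in auto)
      show "cmod (of_real x * z0) < r" using that r unfolding r_def by (simp add: norm_mult)
    qed (use w0 inside in \<open>auto simp: r_def\<close>)
    then show ?thesis using that r wz0 unfolding r_def by (simp add: norm_mult)
  qed
  moreover have "cmod (w (cis y * z0)) \<le> cmod (w z0)" for y
    using closed_bound wz0 unfolding r_def by (simp add: norm_mult)
  ultimately obtain k where "1 \<le> k" "z0 * deriv w z0 = of_real k * w z0"
    using logderiv_real_ge_one[OF w' \<open>w z0 \<noteq> 0\<close>] by blast
  then show ?thesis using that z0(1) \<open>z0 \<noteq> 0\<close> wz0 inside by blast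
qed

lemma Re_pos_on_connected_if_sq_near_one:
  fixes p :: "'a::topological_space \<Rightarrow> complex"
  assumes "connected S" "continuous_on S p" "a \<in> S" "0 < Re (p a)"
    and near_one: "\<And>z. z \<in> S \<Longrightarrow> cmod ((p z)\<^sup>2 - 1) < 1"
    and "z \<in> S"
  shows "0 < Re (p z)"
proof (rule ccontr)
  assume "\<not> 0 < Re (p z)"
  then obtain y where "y \<in> S" "Re (p y) = 0"
    using connected_ivt_component[where S = "p ` S" and x = "p z" and y = "p a" and k = 1 and a = 0]
      assms by (auto simp: connected_continuous_image)
  then have "Re ((p y)\<^sup>2 - 1) \<le> -1" by (simp add: power2_eq_square)
  then have "1 \<le> cmod ((p y)\<^sup>2 - 1)" using abs_Re_le_cmod[of "(p y)\<^sup>2 - 1"] by linarith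
  with near_one[OF \<open>y \<in> S\<close>] show False by simp
qed

lemma Re_nonneg_on_cball_if_sq_near_one:
  fixes p :: "complex \<Rightarrow> complex"
  assumes "continuous_on (cball 0 r) p" "0 < r" "0 < Re (p 0)"
    and near_one: "\<And>z. cmod z < r \<Longrightarrow> cmod ((p z)\<^sup>2 - 1) < 1"
    and "cmod z \<le> r"
  shows "0 \<le> Re (p z)"
proof -
  have "p ` closure (ball 0 r) \<subseteq> {z. 0 \<le> Re z}"
  proof (rule image_closure_subset)
    show "continuous_on (closure (ball 0 r)) p" using assms by simp
    show "p ` ball 0 r \<subseteq> {z. 0 \<le> Re z}"
      using Re_pos_on_connected_if_sq_near_one[of "ball 0 r" p 0] assms
      by (force simp: continuous_on_subset[OF assms(1)] less_imp_le)
  qed (rule closed_halfspace_Re_ge)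
  then show ?thesis using assms by (auto simp: image_subset_iff)
qed

lemma subordinate_sqrt_family_value:
  fixes c :: real
  assumes sub: "subordinate G (\<lambda>z. (1/3) * (csqrt (1 + of_real c * z)) ^ 3
                               + of_real c * z / (2 * csqrt (1 + of_real c * z)))"
    and c: "0 < c" "c \<le> 1" and z: "z \<in> unit_disk"
  obtains t where "0 \<le> Re t" "cmod (t\<^sup>2 - 1) < c" "t \<noteq> 0"
    "G z = (1/3) * t^3 + (t\<^sup>2 - 1) / (2 * t)"
proof -
  obtain \<omega> where \<omega>: "\<omega> ` unit_disk \<subseteq> unit_disk"
    and G: "G z = (1/3) * (csqrt (1 + of_real c * \<omega> z)) ^ 3
                  + of_real c * \<omega> z / (2 * csqrt (1 + of_real c * \<omega> z))"
    using sub z unfolding subordinate_def by blast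
  define t where "t = csqrt (1 + of_real c * \<omega> z)"
  have ct: "of_real c * \<omega> z = t\<^sup>2 - 1" unfolding t_def by simp
  have "\<omega> z \<in> unit_disk" using \<omega> z by blast
  then have "cmod (\<omega> z) < 1" unfolding unit_disk_def by simp
  then have "cmod (t\<^sup>2 - 1) < c" unfolding ct[symmetric] using c by (simp add: norm_mult)
  moreover have "t \<noteq> 0" using calculation c by auto
  moreover have "0 \<le> Re t" unfolding t_def by (rule Re_csqrt)
  moreover have "G z = (1/3) * t^3 + (t\<^sup>2 - 1) / (2 * t)" using G unfolding t_def[symmetric] unfolding ct .
  ultimately show ?thesis using that by blast
qed

lemma Jack_lemma_sq_near_one:
  fixes c :: real and p :: "complex \<Rightarrow> complex"
  assumes c: "0 < c" "c \<le> 1" and pholo: "p holomorphic_on ball 0 1" and p0: "p 0 = 1"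
    and y: "y \<in> ball 0 1" "c \<le> cmod ((p y)\<^sup>2 - 1)"
  obtains z0 k where "z0 \<in> ball 0 1" "z0 \<noteq> 0" "0 \<le> Re (p z0)" "cmod ((p z0)\<^sup>2 - 1) = c"
    "1 \<le> k" "2 * p z0 * (z0 * deriv p z0) = of_real k * ((p z0)\<^sup>2 - 1)"
proof -
  define w where "w z = ((p z)\<^sup>2 - 1) / of_real c" for z
  have wholo: "w holomorphic_on ball 0 1" unfolding w_def using pholo c by (intro holomorphic_intros) auto
  have "w 0 = 0" unfolding w_def p0 by simp
  have norm_w: "cmod ((p z)\<^sup>2 - 1) = c * cmod (w z)" for z
    unfolding w_def using c by (simp add: norm_divide)
  have "1 \<le> cmod (w y)" using y(2) c unfolding norm_w by simp
  then obtain z0 k where z0: "z0 \<in> ball 0 1" "z0 \<noteq> 0" "cmod (w z0) = 1"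
    and inside: "\<And>z. cmod z < cmod z0 \<Longrightarrow> cmod (w z) < 1" and k: "1 \<le> k"
    and jack: "z0 * deriv w z0 = of_real k * w z0"
    using Jack_lemma[OF wholo \<open>w 0 = 0\<close> y(1)] by blast
  have "continuous_on (cball 0 (cmod z0)) p"
    using z0(1) by (intro holomorphic_on_imp_continuous_on holomorphic_on_subset[OF pholo]) auto
  moreover have "cmod ((p z)\<^sup>2 - 1) < 1" if "cmod z < cmod z0" for z
  proof -
    have "c * cmod (w z) < 1 * 1"
      by (rule mult_le_less_imp_less) (use c inside[OF that] in auto)
    then show ?thesis using norm_w by simp
  qed
  ultimately have "0 \<le> Re (p z0)"
    using Re_nonneg_on_cball_if_sq_near_one[of "cmod z0" p z0] z0(2) p0 by simp
  moreover have "(p has_field_derivative deriv p z0) (at z0)"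
    using holomorphic_derivI[OF pholo _ z0(1)] by simp
  then have "(w has_field_derivative 2 * p z0 * deriv p z0 / of_real c) (at z0)"
    unfolding w_def using c by (auto intro!: derivative_eq_intros simp: power2_eq_square)
  then have "2 * p z0 * (z0 * deriv p z0) = of_real k * ((p z0)\<^sup>2 - 1)"
    using jack c unfolding w_def by (simp add: DERIV_imp_deriv field_simps)
  moreover have "cmod ((p z0)\<^sup>2 - 1) = c" unfolding norm_w z0(3) by simp
  ultimately show ?thesis using that z0(1,2) k by blast
qed

lemma cubic_differential_subordination:
  fixes c :: real and p :: "complex \<Rightarrow> complex"
  assumes c: "0 < c" "c \<le> 1" and holo: "p holomorphic_on unit_disk" and p0: "p 0 = 1"
    and sub: "subordinate (\<lambda>z. (1/3) * (p z) ^ 3 + z * deriv p z)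
                (\<lambda>z. (1/3) * (csqrt (1 + of_real c * z)) ^ 3
                     + of_real c * z / (2 * csqrt (1 + of_real c * z)))"
    and z: "z \<in> unit_disk"
  shows "cmod ((p z)\<^sup>2 - 1) < c"
proof (rule ccontr)
  assume "\<not> cmod ((p z)\<^sup>2 - 1) < c"
  then have "c \<le> cmod ((p z)\<^sup>2 - 1)" by simp
  moreover have pz: "p holomorphic_on ball 0 1" "z \<in> ball 0 1"
    using holo z unfolding unit_disk_def by auto
  ultimately obtain z0 k where z0: "z0 \<in> ball 0 1" and s: "0 \<le> Re (p z0)" "cmod ((p z0)\<^sup>2 - 1) = c"
    and k: "1 \<le> k" and P: "2 * p z0 * (z0 * deriv p z0) = of_real k * ((p z0)\<^sup>2 - 1)"
    using Jack_lemma_sq_near_one[OF c pz(1) p0 pz(2)] by blast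
  obtain t where t: "0 \<le> Re t" "cmod (t\<^sup>2 - 1) < c" "t \<noteq> 0"
    and "(1/3) * (p z0) ^ 3 + z0 * deriv p z0 = (1/3) * t^3 + (t\<^sup>2 - 1) / (2 * t)"
    using subordinate_sqrt_family_value[OF sub c, of z0] z0 unfolding unit_disk_def by auto
  with admissibility_condition_fails[OF c s t k P] show False by blast
qed

(* The value at 0 is the removable-singularity value for f in class A. *)
definition zlogderiv :: "(complex \<Rightarrow> complex) \<Rightarrow> complex \<Rightarrow> complex" where
  "zlogderiv f z = (if z = 0 then 1 else z * deriv f z / f z)"

lemma zlogderiv_holomorphic:
  assumes "classA f" and nz: "\<forall>z\<in>unit_disk - {0}. f z \<noteq> 0"
  shows "zlogderiv f holomorphic_on unit_disk"
proof -
  have fholo: "f holomorphic_on ball 0 1" and "f 0 = 0" "deriv f 0 = 1"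
    using assms(1) unfolding classA_def unit_disk_def by auto
  define g where "g z = (if z = 0 then deriv f 0 else (f z - f 0) / (z - 0))" for z
  have "g holomorphic_on ball 0 1" unfolding g_def by (rule pole_lemma[OF fholo]) simp
  moreover have "deriv f holomorphic_on ball 0 1" by (rule holomorphic_deriv[OF fholo]) simp
  moreover have "g z \<noteq> 0" if "z \<in> ball 0 1" for z
    using that nz \<open>f 0 = 0\<close> \<open>deriv f 0 = 1\<close> unfolding g_def unit_disk_def by auto
  ultimately have "(\<lambda>z. deriv f z / g z) holomorphic_on ball 0 1"
    using fholo by (intro holomorphic_intros) auto
  moreover have "deriv f z / g z = zlogderiv f z" for z
    unfolding g_def zlogderiv_def using \<open>f 0 = 0\<close> \<open>deriv f 0 = 1\<close> by simp
  ultimately show ?thesis unfolding unit_disk_def by simp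
qed

lemma z_deriv_zlogderiv:
  assumes holo: "f holomorphic_on S" and "open S" "z \<in> S" "z \<noteq> 0" "f z \<noteq> 0"
  shows "z * deriv (zlogderiv f) z =
    z * deriv f z / f z + z\<^sup>2 * deriv (deriv f) z / f z - (z * deriv f z / f z)\<^sup>2"
proof -
  have f': "(f has_field_derivative deriv f z) (at z)"
    using holomorphic_derivI[OF holo assms(2,3)] .
  have f'': "(deriv f has_field_derivative deriv (deriv f) z) (at z)"
    using holomorphic_derivI[OF holomorphic_deriv[OF holo assms(2)] assms(2,3)] .
  have "((\<lambda>y. y * deriv f y / f y) has_field_derivative
      ((deriv f z + z * deriv (deriv f) z) * f z - z * deriv f z * deriv f z) / (f z)\<^sup>2) (at z)"
    using f' f'' \<open>f z \<noteq> 0\<close> by (auto intro!: derivative_eq_intros simp: power2_eq_square)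
  then have "(zlogderiv f has_field_derivative
      ((deriv f z + z * deriv (deriv f) z) * f z - z * deriv f z * deriv f z) / (f z)\<^sup>2) (at z)"
    by (rule has_field_derivative_transform_within_open[where S = "- {0}"])
       (use \<open>z \<noteq> 0\<close> in \<open>auto simp: zlogderiv_def\<close>)
  then show ?thesis using \<open>f z \<noteq> 0\<close> by (simp add: DERIV_imp_deriv field_simps power2_eq_square)
qed

theorem corollary2p9:
  fixes c :: real and f :: "complex \<Rightarrow> complex"
  assumes c: "0 < c" "c \<le> 1"
    and fA: "classA f"
    and fnz: "\<forall>z\<in>unit_disk - {0}. f z \<noteq> 0"
    and F_hol: "F holomorphic_on unit_disk"
    and F_eq: "\<forall>z\<in>unit_disk - {0}.
        F z = (1/3) * (z * deriv f z / f z) ^ 3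
              + (z * deriv f z / f z)
              + z ^ 2 * deriv (deriv f) z / f z
              - (z * deriv f z / f z) ^ 2"
    and sub: "subordinate F (\<lambda>z. (1/3) * (csqrt (1 + of_real c * z)) ^ 3
                               + of_real c * z / (2 * csqrt (1 + of_real c * z)))"
  shows "Sstar_qc c f"
proof -
  let ?p = "zlogderiv f"
  have F_cubic: "F z = (1/3) * (?p z) ^ 3 + z * deriv ?p z" if "z \<in> unit_disk" for z
  proof (cases "z = 0")
    case True
    then show ?thesis using sub that by (auto simp: subordinate_def zlogderiv_def)
  next
    case False
    have "f holomorphic_on unit_disk" using fA by (simp add: classA_def)
    then show ?thesis
      using z_deriv_zlogderiv[of f unit_disk z] F_eq fnz that False
      by (simp add: unit_disk_def zlogderiv_def)
  qed
  have sub_p: "subordinate (\<lambda>z. (1/3) * (?p z) ^ 3 + z * deriv ?p z)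
      (\<lambda>z. (1/3) * (csqrt (1 + of_real c * z)) ^ 3 + of_real c * z / (2 * csqrt (1 + of_real c * z)))"
    using sub F_cubic unfolding subordinate_def by simp
  have "cmod ((z * deriv f z / f z)\<^sup>2 - 1) < c" if "z \<in> unit_disk - {0}" for z
    using cubic_differential_subordination[OF c zlogderiv_holomorphic[OF fA fnz] _ sub_p, of z] that
    by (simp add: zlogderiv_def)
  then show ?thesis using fA fnz unfolding Sstar_qc_def by blast
qed

end
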